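(* Let $t,k\ge1$ with $k\le t/6$ and let $F$ be a $[t,k]$-interval system. Then there exists a randomized $[t,k]$-interval system $\mathcal{F}$ such that (1) $\mathrm{Sets}(\mathcal{F})=\mathrm{Sets}(F)$; (2) $\mathrm{val}(\mathcal{F})\le5\,\mathrm{val}(F)$; (3) $\mathcal{F}$ is valid.
   Context: An interval is a nonempty set $\{a,\ldots,b\}$ of integers; a $[t,k]$-interval system is a set of $k$ pairwise disjoint intervals contained in $[t]$; a randomized one is a distribution over such systems. $\mathrm{val}(F)=\sum_{I\in F}1/|I|$, $\mathrm{val}(\mathcal{F})=\mathbb{E}_{F\sim\mathcal{F}}\mathrm{val}(F)$. $\mathrm{Sets}(F)$ is the distribution of the set obtained by choosing independently a uniform element from each interval of $F$; $\mathrm{Sets}(\mathcal{F})$ samples $F\sim\mathcal{F}$ then a set from $\mathrm{Sets}(F)$. A $[t]$-interval system $F$ is valid if $\sum_{I\in F}|I|\le t/2$; a randomized one is valid if every system in its support is valid. *)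

theory Defs
  imports "HOL-Probability.Probability"
begin

definition is_interval :: "int set \<Rightarrow> bool" where
  "is_interval I \<longleftrightarrow> (\<exists>a b. a \<le> b \<and> I = {a..b})"

definition interval_system :: "nat \<Rightarrow> nat \<Rightarrow> int set set \<Rightarrow> bool" where
  "interval_system t k F \<longleftrightarrow>
     finite F \<and> card F = k \<and>
     (\<forall>I\<in>F. is_interval I \<and> I \<subseteq> {1..int t}) \<and>
     (\<forall>I\<in>F. \<forall>J\<in>F. I \<noteq> J \<longrightarrow> I \<inter> J = {})"

definition rand_interval_system :: "nat \<Rightarrow> nat \<Rightarrow> int set set pmf \<Rightarrow> bool" where
  "rand_interval_system t k \<F> \<longleftrightarrow> (\<forall>F\<in>set_pmf \<F>. interval_system t k F)"

definition val :: "int set set \<Rightarrow> real" where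
  "val F = (\<Sum>I\<in>F. 1 / real (card I))"

definition rval :: "int set set pmf \<Rightarrow> real" where
  "rval \<F> = measure_pmf.expectation \<F> val"

definition Sets :: "int set set \<Rightarrow> int set pmf" where
  "Sets F = map_pmf (\<lambda>f. f ` F) (Pi_pmf F undefined (\<lambda>I. pmf_of_set I))"

definition rSets :: "int set set pmf \<Rightarrow> int set pmf" where
  "rSets \<F> = bind_pmf \<F> Sets"

definition valid :: "nat \<Rightarrow> int set set \<Rightarrow> bool" where
  "valid t F \<longleftrightarrow> real (\<Sum>I\<in>F. card I) \<le> real t / 2"

definition rvalid :: "nat \<Rightarrow> int set set pmf \<Rightarrow> bool" where
  "rvalid t \<F> \<longleftrightarrow> (\<forall>F\<in>set_pmf \<F>. valid t F)"

end

theory Submission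
  imports Defs
begin

text \<open>Cut every interval \<open>I\<close> into at most four consecutive blocks of length
  \<open>\<lfloor>|I|/4\<rfloor> + 1\<close> and, independently for each \<open>I\<close>, replace \<open>I\<close> by the block of a uniformly
  random point of \<open>I\<close>. A uniform point of the block of a uniform point of \<open>I\<close> is uniform on \<open>I\<close>,
  so the distribution of the sampled set is unchanged. A block of size \<open>s\<close> is chosen with
  probability \<open>s/|I|\<close>, so the expected value of \<open>1/s\<close> is the number of blocks divided by \<open>|I|\<close>,
  at most \<open>4/|I|\<close>. The total length of the blocks is at most \<open>t/4 + k \<le> t/2\<close>.\<close>

definition partition_map :: "'a set \<Rightarrow> ('a \<Rightarrow> 'a set) \<Rightarrow> bool" where
  "partition_map I P \<longleftrightarrow> (\<forall>x\<in>I. x \<in> P x \<and> P x \<subseteq> I \<and> (\<forall>y\<in>P x. P y = P x))"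

lemma partition_mapD:
  assumes "partition_map I P" "x \<in> I"
  shows "x \<in> P x" "P x \<subseteq> I" "y \<in> P x \<Longrightarrow> P y = P x"
  using assms unfolding partition_map_def by blast+

lemma partition_map_mem_iff:
  assumes "partition_map I P" "x \<in> I" "y \<in> I"
  shows "y \<in> P x \<longleftrightarrow> x \<in> P y"
  using partition_mapD[OF assms(1)] assms(2,3) by metis

lemma bind_pmf_of_set_partition_map:
  assumes fin: "finite I" and ne: "I \<noteq> {}" and P: "partition_map I P"
  shows "bind_pmf (pmf_of_set I) (\<lambda>x. pmf_of_set (P x)) = pmf_of_set I"
proof (rule pmf_eqI)
  fix y
  have finP: "finite (P x)" and neP: "P x \<noteq> {}" if "x \<in> I" for x
    using partition_mapD[OF P that] fin finite_subset by blast+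
  have "pmf (bind_pmf (pmf_of_set I) (\<lambda>x. pmf_of_set (P x))) y
        = (\<Sum>x\<in>I. pmf (pmf_of_set (P x)) y) / card I"
    by (simp add: pmf_bind integral_pmf_of_set[OF ne fin])
  also have "(\<Sum>x\<in>I. pmf (pmf_of_set (P x)) y) = (\<Sum>x\<in>I. indicator (P x) y / card (P x))"
    by (intro sum.cong refl) (simp add: pmf_of_set[OF neP finP])
  also have "(\<Sum>x\<in>I. indicator (P x) y / card (P x)) = indicator I y"
  proof (cases "y \<in> I")
    case True
    \<comment> \<open>\<open>y \<in> P x\<close> iff \<open>x \<in> P y\<close>, and then \<open>P x = P y\<close>: the sum runs over the block of \<open>y\<close>.\<close>
    have "(\<Sum>x\<in>I. indicator (P x) y / card (P x)) = (\<Sum>x\<in>I. indicator (P y) x / card (P y))"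
    proof (rule sum.cong[OF refl])
      fix x assume x: "x \<in> I"
      show "indicator (P x) y / real (card (P x)) = indicator (P y) x / real (card (P y))"
      proof (cases "y \<in> P x")
        case True
        then show ?thesis
          using partition_map_mem_iff[OF P x \<open>y \<in> I\<close>] partition_mapD(3)[OF P x True] by simp
      next
        case False
        then show ?thesis using partition_map_mem_iff[OF P x \<open>y \<in> I\<close>] by simp
      qed
    qed
    also have "\<dots> = card (I \<inter> P y) / card (P y)"
      using sum.inter_restrict[OF fin, of "\<lambda>_. 1::real" "P y"]
      by (simp add: sum_divide_distrib[symmetric] indicator_def of_bool_def)
    also have "I \<inter> P y = P y" using partition_mapD(2)[OF P True] by blast
    finally show ?thesis using True finP neP by simp
  next
    case False
    then have "y \<notin> P x" if "x \<in> I" for x using partition_mapD(2)[OF P that] by blast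
    then show ?thesis using False by (simp add: indicator_def)
  qed
  finally show "pmf (bind_pmf (pmf_of_set I) (\<lambda>x. pmf_of_set (P x))) y = pmf (pmf_of_set I) y"
    using ne fin by simp
qed

lemma sum_inverse_card_partition_map:
  assumes fin: "finite I" and P: "partition_map I P"
  shows "(\<Sum>x\<in>I. 1 / real (card (P x))) = card (P ` I)"
proof -
  have "(\<Sum>x\<in>I. 1 / real (card (P x))) = (\<Sum>B\<in>P ` I. \<Sum>x\<in>{x\<in>I. P x = B}. 1 / real (card (P x)))"
    by (rule sum.image_gen[OF fin])
  also have "\<dots> = (\<Sum>B\<in>P ` I. 1)"
  proof (rule sum.cong[OF refl])
    fix B assume "B \<in> P ` I"
    then obtain z where z: "z \<in> I" "B = P z" by auto
    have block: "{x\<in>I. P x = B} = P z"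
      using partition_mapD[OF P] partition_map_mem_iff[OF P] z by blast
    have "(\<Sum>x\<in>P z. 1 / real (card (P x))) = (\<Sum>x\<in>P z. 1 / real (card (P z)))"
      by (rule sum.cong[OF refl]) (metis partition_mapD(3)[OF P z(1)])
    moreover have "finite (P z)" "z \<in> P z" using partition_mapD[OF P z(1)] fin finite_subset by blast+
    ultimately show "(\<Sum>x\<in>{x\<in>I. P x = B}. 1 / real (card (P x))) = 1"
      unfolding block by auto
  qed
  finally show ?thesis by simp
qed

lemma int_div_eq_iff:
  fixes z q s :: int assumes "0 < s"
  shows "z div s = q \<longleftrightarrow> q * s \<le> z \<and> z < q * s + s"
proof
  assume "z div s = q"
  then have "z = q * s + z mod s" by (metis div_mult_mod_eq)
  moreover have "0 \<le> z mod s" "z mod s < s" using assms by auto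
  ultimately show "q * s \<le> z \<and> z < q * s + s" by linarith
next
  assume "q * s \<le> z \<and> z < q * s + s"
  then show "z div s = q" by (intro int_div_pos_eq[of z s q "z - s * q"]) (auto simp: mult.commute)
qed

definition chunk_width :: "nat \<Rightarrow> int set \<Rightarrow> int" where
  "chunk_width m I = int (card I div m + 1)"

definition chunk_start :: "nat \<Rightarrow> int set \<Rightarrow> int \<Rightarrow> int" where
  "chunk_start m I x = Min I + (x - Min I) div chunk_width m I * chunk_width m I"

definition chunk :: "nat \<Rightarrow> int set \<Rightarrow> int \<Rightarrow> int set" where
  "chunk m I x = {y \<in> I. (y - Min I) div chunk_width m I = (x - Min I) div chunk_width m I}"

lemma partition_map_chunk: "partition_map I (chunk m I)"
  unfolding partition_map_def chunk_def by auto

lemma chunk_eq_Int: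
  "chunk m I x = I \<inter> {chunk_start m I x ..< chunk_start m I x + chunk_width m I}"
proof -
  have "0 < chunk_width m I" by (simp add: chunk_width_def)
  then show ?thesis
    unfolding chunk_def chunk_start_def by (auto simp: int_div_eq_iff)
qed

lemma card_chunk_le: "card (chunk m I x) \<le> card I div m + 1"
proof -
  have "card (chunk m I x) \<le> card {chunk_start m I x ..< chunk_start m I x + chunk_width m I}"
    unfolding chunk_eq_Int by (intro card_mono) auto
  then show ?thesis by (simp add: chunk_width_def)
qed

lemma is_interval_chunk:
  assumes "is_interval I" "x \<in> I"
  shows "is_interval (chunk m I x)"
proof -
  obtain a b where I: "a \<le> b" "I = {a..b}" using assms(1) by (auto simp: is_interval_def)
  define c where "c = chunk_start m I x"
  define d where "d = chunk_start m I x + chunk_width m I"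
  have "chunk m I x = {a..b} \<inter> {c..<d}"
    unfolding chunk_eq_Int c_def d_def I(2) ..
  also have "\<dots> = {max a c .. min b (d - 1)}" by auto
  finally have chunk: "chunk m I x = {max a c .. min b (d - 1)}" .
  moreover have "x \<in> chunk m I x" using partition_mapD(1)[OF partition_map_chunk assms(2)] .
  ultimately show ?thesis unfolding is_interval_def by (metis atLeastAtMost_iff order.trans)
qed

lemma card_chunk_image_le:
  assumes "is_interval I" "0 < m"
  shows "card (chunk m I ` I) \<le> m"
proof -
  obtain a b where I: "a \<le> b" "I = {a..b}" using assms(1) by (auto simp: is_interval_def)
  define s where "s = chunk_width m I"
  have s: "0 < s" by (simp add: s_def chunk_width_def)
  have "card I = m * (card I div m) + card I mod m" by simp
  moreover have "card I mod m < m" using assms(2) by simp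
  ultimately have "card I < m * (card I div m + 1)" unfolding distrib_left by linarith
  then have "int (card I) < int m * s"
    unfolding s_def chunk_width_def by (metis of_nat_less_iff of_nat_mult)
  have quotient: "(x - a) div s \<in> {0..<int m}" if "x \<in> I" for x
  proof -
    have "(x - a) div s * s \<le> x - a" using int_div_eq_iff[OF s] by blast
    also have "x - a < int m * s" using \<open>int (card I) < int m * s\<close> that I by simp
    finally have "(x - a) div s < int m" using s by simp
    then show ?thesis using that I s by (simp add: pos_imp_zdiv_nonneg_iff)
  qed
  have "Min I = a" unfolding I(2) using I(1) by (intro Min_eqI) auto
  then have "chunk m I x = {y \<in> I. (y - a) div s = (x - a) div s}" for x
    by (simp add: chunk_def s_def)
  then have "chunk m I ` I \<subseteq> (\<lambda>q. {y \<in> I. (y - a) div s = q}) ` {0..<int m}"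
    using quotient by auto
  then have "card (chunk m I ` I) \<le> card ((\<lambda>q. {y \<in> I. (y - a) div s = q}) ` {0..<int m})"
    by (intro card_mono) auto
  also have "\<dots> \<le> m" using card_image_le[of "{0..<int m}"] by simp
  finally show ?thesis .
qed

lemma map_pmf_image_Pi_pmf_insert:
  assumes "finite A" "x \<notin> A"
  shows "map_pmf (\<lambda>f. f ` insert x A) (Pi_pmf (insert x A) d p)
       = map_pmf (\<lambda>(y, S). insert y S) (pair_pmf (p x) (map_pmf (\<lambda>f. f ` A) (Pi_pmf A d p)))"
proof -
  have "pair_pmf (p x) (map_pmf (\<lambda>f. f ` A) (Pi_pmf A d p))
     = map_pmf (\<lambda>(y, f). (id y, f ` A)) (pair_pmf (p x) (Pi_pmf A d p))"
    by (simp add: map_pair pmf.map_id)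
  moreover have "A \<inter> {y. y \<noteq> x} = A" using assms by auto
  ultimately show ?thesis using assms
    by (simp add: Pi_pmf_insert map_pmf_comp case_prod_beta fun_upd_image)
qed

lemma map_pmf_image_Pi_pmf_reindex:
  assumes "finite A" "inj_on g A"
  shows "map_pmf (\<lambda>f. f ` g ` A) (Pi_pmf (g ` A) d q)
       = map_pmf (\<lambda>f. f ` A) (Pi_pmf A d (\<lambda>x. q (g x)))"
  using assms
proof (induction A rule: finite_induct)
  case empty
  then show ?case by simp
next
  case (insert x A)
  then have "g x \<notin> g ` A" "inj_on g A" by auto
  then have "map_pmf (\<lambda>f. f ` g ` insert x A) (Pi_pmf (g ` insert x A) d q)
      = map_pmf (\<lambda>(y, S). insert y S)
          (pair_pmf (q (g x)) (map_pmf (\<lambda>f. f ` A) (Pi_pmf A d (\<lambda>x. q (g x)))))"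
    using map_pmf_image_Pi_pmf_insert[of "g ` A" "g x" d q] insert by simp
  also have "\<dots> = map_pmf (\<lambda>f. f ` insert x A) (Pi_pmf (insert x A) d (\<lambda>x. q (g x)))"
    using map_pmf_image_Pi_pmf_insert[of A x d "\<lambda>x. q (g x)"] insert(1,2) by simp
  finally show ?case .
qed

lemma inj_on_disjoint_choice:
  assumes "disjoint F" and "\<And>I. I \<in> F \<Longrightarrow> g I \<subseteq> I \<and> g I \<noteq> {}"
  shows "inj_on g F"
proof (rule inj_onI)
  fix I J assume "I \<in> F" "J \<in> F" "g I = g J"
  then have "g I \<subseteq> I \<inter> J" "g I \<noteq> {}" using assms(2) by blast+
  with \<open>I \<in> F\<close> \<open>J \<in> F\<close> assms(1) show "I = J" unfolding pairwise_def disjnt_def by blast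
qed

locale block_refinement =
  fixes F :: "int set set" and B :: "int set \<Rightarrow> int \<Rightarrow> int set"
  assumes finite_F: "finite F"
    and disjoint_F: "disjoint F"
    and finite_member: "I \<in> F \<Longrightarrow> finite I"
    and nonempty_member: "I \<in> F \<Longrightarrow> I \<noteq> {}"
    and partition_map_member: "I \<in> F \<Longrightarrow> partition_map I (B I)"
begin

definition block_choice :: "(int set \<Rightarrow> int set) pmf" where
  "block_choice = Pi_pmf F undefined (\<lambda>I. map_pmf (B I) (pmf_of_set I))"

definition refinement :: "int set set pmf" where
  "refinement = map_pmf (\<lambda>g. g ` F) block_choice"

lemma block_choice_block:
  assumes "g \<in> set_pmf block_choice" "I \<in> F"
  obtains x where "x \<in> I" "g I = B I x"
proof -
  have "g I \<in> set_pmf (map_pmf (B I) (pmf_of_set I))"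
    using assms finite_F unfolding block_choice_def set_Pi_pmf[OF finite_F] PiE_dflt_def by auto
  then show ?thesis
    using that finite_member[OF assms(2)] nonempty_member[OF assms(2)] by auto
qed

lemma block_choice_subset_nonempty:
  assumes "g \<in> set_pmf block_choice" "I \<in> F"
  shows "g I \<subseteq> I" "g I \<noteq> {}"
proof -
  obtain x where "x \<in> I" "g I = B I x" using block_choice_block[OF assms] .
  with partition_mapD(1,2)[OF partition_map_member[OF assms(2)]] show "g I \<subseteq> I" "g I \<noteq> {}"
    by blast+
qed

lemma inj_on_block_choice: "g \<in> set_pmf block_choice \<Longrightarrow> inj_on g F"
  by (intro inj_on_disjoint_choice[OF disjoint_F]) (simp add: block_choice_subset_nonempty)

lemma rSets_refinement: "rSets refinement = Sets F"
proof -
  have "rSets refinement = bind_pmf block_choice (\<lambda>g. Sets (g ` F))"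
    by (simp add: rSets_def refinement_def bind_map_pmf)
  also have "\<dots> = bind_pmf block_choice
      (\<lambda>g. map_pmf (\<lambda>h. h ` F) (Pi_pmf F undefined (\<lambda>I. pmf_of_set (g I))))"
    unfolding Sets_def
    by (intro bind_pmf_cong refl map_pmf_image_Pi_pmf_reindex finite_F inj_on_block_choice)
  also have "\<dots> = map_pmf (\<lambda>h. h ` F)
      (bind_pmf block_choice (\<lambda>g. Pi_pmf F undefined (\<lambda>I. pmf_of_set (g I))))"
    by (simp add: map_bind_pmf)
  also have "bind_pmf block_choice (\<lambda>g. Pi_pmf F undefined (\<lambda>I. pmf_of_set (g I)))
      = Pi_pmf F undefined (\<lambda>I. bind_pmf (map_pmf (B I) (pmf_of_set I)) pmf_of_set)"
    unfolding block_choice_def by (rule Pi_pmf_bind[OF finite_F, symmetric])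
  also have "\<dots> = Pi_pmf F undefined pmf_of_set"
  proof (rule Pi_pmf_cong[OF refl refl])
    fix I assume "I \<in> F"
    then show "bind_pmf (map_pmf (B I) (pmf_of_set I)) pmf_of_set = pmf_of_set I"
      unfolding bind_map_pmf
      by (intro bind_pmf_of_set_partition_map finite_member nonempty_member partition_map_member)
  qed
  finally show ?thesis by (simp add: Sets_def)
qed

lemma expectation_inverse_card_block:
  assumes "I \<in> F"
  shows "measure_pmf.expectation block_choice (\<lambda>g. 1 / real (card (g I)))
       = card (B I ` I) / card I"
proof -
  have "measure_pmf.expectation block_choice (\<lambda>g. 1 / real (card (g I)))
       = measure_pmf.expectation (map_pmf (\<lambda>g. g I) block_choice) (\<lambda>J. 1 / real (card J))"
    by simp
  also have "map_pmf (\<lambda>g. g I) block_choice = map_pmf (B I) (pmf_of_set I)"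
    unfolding block_choice_def
    using Pi_pmf_component[OF finite_F, of I undefined "\<lambda>I. map_pmf (B I) (pmf_of_set I)"] assms
    by simp
  also have "measure_pmf.expectation (map_pmf (B I) (pmf_of_set I)) (\<lambda>J. 1 / real (card J))
      = (\<Sum>x\<in>I. 1 / real (card (B I x))) / card I"
    by (simp add: integral_pmf_of_set[OF nonempty_member[OF assms] finite_member[OF assms]])
  also have "(\<Sum>x\<in>I. 1 / real (card (B I x))) = card (B I ` I)"
    by (rule sum_inverse_card_partition_map[OF finite_member[OF assms] partition_map_member[OF assms]])
  finally show ?thesis .
qed

lemma rval_refinement: "rval refinement = (\<Sum>I\<in>F. card (B I ` I) / card I)"
proof -
  have val_image: "val (g ` F) = (\<Sum>I\<in>F. 1 / real (card (g I)))"
    if "g \<in> set_pmf block_choice" for g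
    unfolding val_def using sum.reindex[OF inj_on_block_choice[OF that]] by simp
  have integrable: "integrable block_choice (\<lambda>g. 1 / real (card (g I)))" for I
    by (rule measure_pmf.integrable_const_bound[where B = 1]) (auto intro!: AE_pmfI simp: divide_le_eq_1)
  have "rval refinement = measure_pmf.expectation block_choice (\<lambda>g. \<Sum>I\<in>F. 1 / real (card (g I)))"
    unfolding rval_def refinement_def integral_map_pmf
    by (rule integral_cong_AE) (auto intro!: AE_pmfI simp: val_image)
  also have "\<dots> = (\<Sum>I\<in>F. measure_pmf.expectation block_choice (\<lambda>g. 1 / real (card (g I))))"
    using integrable by (rule Bochner_Integration.integral_sum)
  also have "\<dots> = (\<Sum>I\<in>F. card (B I ` I) / card I)"
    by (rule sum.cong[OF refl expectation_inverse_card_block])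
  finally show ?thesis .
qed

end

lemma interval_system_image:
  assumes F: "interval_system t k F" and inj: "inj_on g F"
    and shrink: "\<And>I. I \<in> F \<Longrightarrow> is_interval (g I) \<and> g I \<subseteq> I"
  shows "interval_system t k (g ` F)"
proof -
  have "finite F" "card F = k" "\<And>I. I \<in> F \<Longrightarrow> I \<subseteq> {1..int t}"
    and disjoint: "\<And>I J. I \<in> F \<Longrightarrow> J \<in> F \<Longrightarrow> I \<noteq> J \<Longrightarrow> I \<inter> J = {}"
    using F unfolding interval_system_def by blast+
  moreover have "g I1 \<inter> g I2 = {}" if "I1 \<in> F" "I2 \<in> F" "g I1 \<noteq> g I2" for I1 I2
    using disjoint[OF that(1,2)] shrink[OF that(1)] shrink[OF that(2)] that(3) by blast
  ultimately show ?thesis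
    unfolding interval_system_def using card_image[OF inj] shrink by fastforce
qed

lemma sum_card_le_of_interval_system:
  assumes "interval_system t k F"
  shows "(\<Sum>I\<in>F. card I) \<le> t"
proof -
  have "finite F" and sub: "\<And>I. I \<in> F \<Longrightarrow> I \<subseteq> {1..int t}"
    and disj: "\<And>I J. I \<in> F \<Longrightarrow> J \<in> F \<Longrightarrow> I \<noteq> J \<Longrightarrow> I \<inter> J = {}"
    using assms unfolding interval_system_def by blast+
  moreover have "\<And>I. I \<in> F \<Longrightarrow> finite I" using sub finite_subset by blast
  moreover have "disjoint F" unfolding pairwise_def disjnt_def using disj by blast
  ultimately have "(\<Sum>I\<in>F. card I) = card (\<Union>F)"
    by (intro card_Union_disjoint[symmetric]) auto
  also have "\<dots> \<le> card {1..int t}"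
    using sub by (intro card_mono) auto
  finally show ?thesis by simp
qed

lemma valid_image_of_quarter_sizes:
  assumes F: "interval_system t k F" and "6 * k \<le> t" and inj: "inj_on g F"
    and quarter: "\<And>I. I \<in> F \<Longrightarrow> card (g I) \<le> card I div 4 + 1"
  shows "valid t (g ` F)"
proof -
  have "4 * card (g I) \<le> card I + 4" if "I \<in> F" for I
    using quarter[OF that] div_times_less_eq_dividend[of "card I" 4] by linarith
  then have "(\<Sum>I\<in>F. 4 * card (g I)) \<le> (\<Sum>I\<in>F. card I + 4)"
    by (rule sum_mono)
  moreover have "(\<Sum>I\<in>F. card I + 4) = (\<Sum>I\<in>F. card I) + 4 * k"
    using F by (simp add: sum.distrib interval_system_def)
  moreover have "(\<Sum>I\<in>F. 4 * card (g I)) = 4 * (\<Sum>J\<in>g ` F. card J)"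
    by (simp add: sum.reindex[OF inj] sum_distrib_left)
  ultimately have "2 * (\<Sum>J\<in>g ` F. card J) \<le> t"
    using sum_card_le_of_interval_system[OF F] \<open>6 * k \<le> t\<close> by linarith
  then have "real (2 * (\<Sum>J\<in>g ` F. card J)) \<le> real t"
    by (simp only: of_nat_le_iff)
  then show ?thesis unfolding valid_def by simp
qed

lemma block_refinement_chunk:
  assumes "interval_system t k F"
  shows "block_refinement F (chunk m)"
proof
  show "finite F" using assms by (simp add: interval_system_def)
  show "disjoint F" using assms unfolding interval_system_def pairwise_def disjnt_def by blast
next
  fix I assume "I \<in> F"
  then obtain a b where "a \<le> b" "I = {a..b}"
    using assms by (auto simp: interval_system_def is_interval_def)
  then show "finite I" "I \<noteq> {}" by auto
  show "partition_map I (chunk m I)" by (rule partition_map_chunk)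
qed

theorem mainTheorem14:
  fixes t k :: nat and F :: "int set set"
  assumes "t \<ge> 1" and "k \<ge> 1" and "real k \<le> real t / 6"
    and "interval_system t k F"
  shows "\<exists>\<F>. rand_interval_system t k \<F> \<and> rSets \<F> = Sets F \<and>
              rval \<F> \<le> 5 * val F \<and> rvalid t \<F>"
proof (intro exI conjI)
  interpret R: block_refinement F "chunk 4"
    using assms(4) by (rule block_refinement_chunk)
  have intervals: "\<And>I. I \<in> F \<Longrightarrow> is_interval I"
    using assms(4) by (simp add: interval_system_def)
  have chunk_choice: "is_interval (g I) \<and> g I \<subseteq> I" "card (g I) \<le> card I div 4 + 1"
    if "g \<in> set_pmf R.block_choice" "I \<in> F" for g I
    using R.block_choice_block[OF that] R.block_choice_subset_nonempty[OF that]
      is_interval_chunk[OF intervals[OF that(2)]] card_chunk_le by metis+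
  show "rand_interval_system t k R.refinement"
    unfolding rand_interval_system_def R.refinement_def
    using interval_system_image[OF assms(4) R.inj_on_block_choice chunk_choice(1)] by auto
  show "rvalid t R.refinement"
    unfolding rvalid_def R.refinement_def using assms(3)
    by (auto intro!: valid_image_of_quarter_sizes[OF assms(4) _ R.inj_on_block_choice chunk_choice(2)])
  show "rSets R.refinement = Sets F"
    by (rule R.rSets_refinement)
  have "rval R.refinement \<le> (\<Sum>I\<in>F. 4 / card I)"
    unfolding R.rval_refinement
    by (intro sum_mono divide_right_mono) (simp_all add: card_chunk_image_le intervals)
  also have "\<dots> \<le> 5 * val F"
    unfolding val_def sum_distrib_left by (intro sum_mono) (simp add: divide_right_mono)
  finally show "rval R.refinement \<le> 5 * val F" .
qed

end
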